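(* For any implicative frame $(X,\perp,Y,T)$, the algebra $(\mathcal{G}(X),\subseteq,\cap,\vee,\bot,X,\Rightarrow)$ of stable sets, where $\bot$ is the least stable set, $\vee$ the join in $\mathcal G(X)$ and $A\Rightarrow C={}'(A\blacktriangleright C')$, is an integral implicative lattice.
   Context: A sorted frame (polarity) is a triple $(X,\perp,Y)$ with $X,Y$ nonempty sets and ${\perp}\subseteq X\times Y$. For $U\subseteq X$ let $U'=\{y\in Y:\forall x\in U\ x\perp y\}$, and for $V\subseteq Y$ let ${}'V=\{x\in X:\forall y\in V\ x\perp y\}$. $A\subseteq X$ is stable if $A={}'(A')$; $B\subseteq Y$ is co-stable if $B=({}'B)'$. $\mathcal{G}(X)$, $\mathcal{G}(Y)$ are the complete lattices of stable, resp. co-stable, sets under inclusion (meets are intersections; joins are closures of unions, the closure of $W\subseteq X$ being ${}'(W')$ and of $W\subseteq Y$ being $W''=({}'W)'$). Preorders: for $x,z\in X$, $x\le z$ iff $\{x\}'\subseteq\{z\}'$; for $y,v\in Y$, $y\le v$ iff ${}'\{y\}\subseteq{}'\{v\}$; separated means both are partial orders. $\Gamma u$ is the set of elements above $u$. For $T\subseteq Y\times X\times Y$, its Galois dual $T'\subseteq X\times X\times Y$ is $uT'xv$ iff $\forall y\,(yTxv\Rightarrow u\perp y)$. An implicative frame is $(X,\perp,Y,T)$ with: (F0) $x\perp y$ iff $uT'xy$ for all $u\in X$; (F1) separated; (F2) each set $\{y: yTxv\}$ equals $\Gamma w$ for some $w\in Y$; (F3) if $yTxv$, $x_1\le x$,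 $v_1\le v$ then $yTx_1v_1$; (F4) for all $u,x\in X,v\in Y$, $\{x_1:uT'x_1v\}$ is stable and $\{v_1:uT'xv_1\}$ is co-stable. For $A\in\mathcal{G}(X)$, $B\in\mathcal{G}(Y)$: $A\blacktriangleright B=(\{y:\exists x\in A\,\exists v\in B\ yTxv\})''$. An integral implicative lattice is a bounded lattice with binary $\to$ satisfying (A1) $(a\vee b)\to c=(a\to c)\wedge(b\to c)$, (A2) $a\to(b\wedge c)=(a\to b)\wedge(a\to c)$, (A3) $a\le b$ iff $1\le a\to b$. *)

theory Defs
  imports Main
begin

text \<open>Sorted frame (polarity) (X, perp, Y); all operations are relative to the carriers X, Y.\<close>

definition rprime :: "'x set \<Rightarrow> 'y set \<Rightarrow> ('x \<Rightarrow> 'y \<Rightarrow> bool) \<Rightarrow> 'x set \<Rightarrow> 'y set" where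
  "rprime X Y R U = {y \<in> Y. \<forall>x\<in>U. R x y}"

definition lprime :: "'x set \<Rightarrow> 'y set \<Rightarrow> ('x \<Rightarrow> 'y \<Rightarrow> bool) \<Rightarrow> 'y set \<Rightarrow> 'x set" where
  "lprime X Y R V = {x \<in> X. \<forall>y\<in>V. R x y}"

definition stable :: "'x set \<Rightarrow> 'y set \<Rightarrow> ('x \<Rightarrow> 'y \<Rightarrow> bool) \<Rightarrow> 'x set \<Rightarrow> bool" where
  "stable X Y R A \<longleftrightarrow> A \<subseteq> X \<and> A = lprime X Y R (rprime X Y R A)"

definition costable :: "'x set \<Rightarrow> 'y set \<Rightarrow> ('x \<Rightarrow> 'y \<Rightarrow> bool) \<Rightarrow> 'y set \<Rightarrow> bool" where
  "costable X Y R B \<longleftrightarrow> B \<subseteq> Y \<and> B = rprime X Y R (lprime X Y R B)"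

definition leX :: "'x set \<Rightarrow> 'y set \<Rightarrow> ('x \<Rightarrow> 'y \<Rightarrow> bool) \<Rightarrow> 'x \<Rightarrow> 'x \<Rightarrow> bool" where
  "leX X Y R x z \<longleftrightarrow> rprime X Y R {x} \<subseteq> rprime X Y R {z}"

definition leY :: "'x set \<Rightarrow> 'y set \<Rightarrow> ('x \<Rightarrow> 'y \<Rightarrow> bool) \<Rightarrow> 'y \<Rightarrow> 'y \<Rightarrow> bool" where
  "leY X Y R y v \<longleftrightarrow> lprime X Y R {y} \<subseteq> lprime X Y R {v}"

definition separated :: "'x set \<Rightarrow> 'y set \<Rightarrow> ('x \<Rightarrow> 'y \<Rightarrow> bool) \<Rightarrow> bool" where
  "separated X Y R \<longleftrightarrow>
     (\<forall>x\<in>X. \<forall>z\<in>X. leX X Y R x z \<and> leX X Y R z x \<longrightarrow> x = z) \<and>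
     (\<forall>y\<in>Y. \<forall>v\<in>Y. leY X Y R y v \<and> leY X Y R v y \<longrightarrow> y = v)"

definition GammaY :: "'x set \<Rightarrow> 'y set \<Rightarrow> ('x \<Rightarrow> 'y \<Rightarrow> bool) \<Rightarrow> 'y \<Rightarrow> 'y set" where
  "GammaY X Y R w = {v \<in> Y. leY X Y R w v}"

text \<open>Galois dual T' of T (a subset of Y x X x Y), a relation on X x X x Y.\<close>
definition Tdual :: "'x set \<Rightarrow> 'y set \<Rightarrow> ('x \<Rightarrow> 'y \<Rightarrow> bool) \<Rightarrow> ('y \<Rightarrow> 'x \<Rightarrow> 'y \<Rightarrow> bool)
     \<Rightarrow> 'x \<Rightarrow> 'x \<Rightarrow> 'y \<Rightarrow> bool" where
  "Tdual X Y R T u x v \<longleftrightarrow> (\<forall>y\<in>Y. T y x v \<longrightarrow> R u y)"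

definition implicative_frame :: "'x set \<Rightarrow> ('x \<Rightarrow> 'y \<Rightarrow> bool) \<Rightarrow> 'y set \<Rightarrow> ('y \<Rightarrow> 'x \<Rightarrow> 'y \<Rightarrow> bool) \<Rightarrow> bool" where
  "implicative_frame X R Y T \<longleftrightarrow>
     X \<noteq> {} \<and> Y \<noteq> {} \<and>
     \<comment> \<open>F0\<close>
     (\<forall>x\<in>X. \<forall>y\<in>Y. R x y \<longleftrightarrow> (\<forall>u\<in>X. Tdual X Y R T u x y)) \<and>
     \<comment> \<open>F1\<close>
     separated X Y R \<and>
     \<comment> \<open>F2\<close>
     (\<forall>x\<in>X. \<forall>v\<in>Y. \<exists>w\<in>Y. {y \<in> Y. T y x v} = GammaY X Y R w) \<and>
     \<comment> \<open>F3\<close>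
     (\<forall>y\<in>Y. \<forall>x\<in>X. \<forall>v\<in>Y. \<forall>x1\<in>X. \<forall>v1\<in>Y.
        T y x v \<and> leX X Y R x1 x \<and> leY X Y R v1 v \<longrightarrow> T y x1 v1) \<and>
     \<comment> \<open>F4\<close>
     (\<forall>u\<in>X. \<forall>x\<in>X. \<forall>v\<in>Y.
        stable X Y R {x1 \<in> X. Tdual X Y R T u x1 v} \<and>
        costable X Y R {v1 \<in> Y. Tdual X Y R T u x v1})"

definition joinG :: "'x set \<Rightarrow> 'y set \<Rightarrow> ('x \<Rightarrow> 'y \<Rightarrow> bool) \<Rightarrow> 'x set \<Rightarrow> 'x set \<Rightarrow> 'x set" where
  "joinG X Y R A B = lprime X Y R (rprime X Y R (A \<union> B))"

definition botG :: "'x set \<Rightarrow> 'y set \<Rightarrow> ('x \<Rightarrow> 'y \<Rightarrow> bool) \<Rightarrow> 'x set" where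
  "botG X Y R = lprime X Y R (rprime X Y R {})"

definition tri :: "'x set \<Rightarrow> ('x \<Rightarrow> 'y \<Rightarrow> bool) \<Rightarrow> 'y set \<Rightarrow> ('y \<Rightarrow> 'x \<Rightarrow> 'y \<Rightarrow> bool)
     \<Rightarrow> 'x set \<Rightarrow> 'y set \<Rightarrow> 'y set" where
  "tri X R Y T A B = rprime X Y R (lprime X Y R {y \<in> Y. \<exists>x\<in>A. \<exists>v\<in>B. T y x v})"

definition impG :: "'x set \<Rightarrow> ('x \<Rightarrow> 'y \<Rightarrow> bool) \<Rightarrow> 'y set \<Rightarrow> ('y \<Rightarrow> 'x \<Rightarrow> 'y \<Rightarrow> bool)
     \<Rightarrow> 'x set \<Rightarrow> 'x set \<Rightarrow> 'x set" where
  "impG X R Y T A C = lprime X Y R (tri X R Y T A (rprime X Y R C))"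

definition bounded_lattice_on :: "'a set \<Rightarrow> ('a \<Rightarrow> 'a \<Rightarrow> bool) \<Rightarrow> ('a \<Rightarrow> 'a \<Rightarrow> 'a)
     \<Rightarrow> ('a \<Rightarrow> 'a \<Rightarrow> 'a) \<Rightarrow> 'a \<Rightarrow> 'a \<Rightarrow> bool" where
  "bounded_lattice_on S le meet join bt tp \<longleftrightarrow>
     (\<forall>a\<in>S. le a a) \<and>
     (\<forall>a\<in>S. \<forall>b\<in>S. le a b \<and> le b a \<longrightarrow> a = b) \<and>
     (\<forall>a\<in>S. \<forall>b\<in>S. \<forall>c\<in>S. le a b \<and> le b c \<longrightarrow> le a c) \<and>
     (\<forall>a\<in>S. \<forall>b\<in>S. meet a b \<in> S \<and> le (meet a b) a \<and> le (meet a b) b \<and>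
        (\<forall>c\<in>S. le c a \<and> le c b \<longrightarrow> le c (meet a b))) \<and>
     (\<forall>a\<in>S. \<forall>b\<in>S. join a b \<in> S \<and> le a (join a b) \<and> le b (join a b) \<and>
        (\<forall>c\<in>S. le a c \<and> le b c \<longrightarrow> le (join a b) c)) \<and>
     bt \<in> S \<and> tp \<in> S \<and> (\<forall>a\<in>S. le bt a \<and> le a tp)"

definition integral_implicative_lattice :: "'a set \<Rightarrow> ('a \<Rightarrow> 'a \<Rightarrow> bool) \<Rightarrow> ('a \<Rightarrow> 'a \<Rightarrow> 'a)
     \<Rightarrow> ('a \<Rightarrow> 'a \<Rightarrow> 'a) \<Rightarrow> 'a \<Rightarrow> 'a \<Rightarrow> ('a \<Rightarrow> 'a \<Rightarrow> 'a) \<Rightarrow> bool" where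
  "integral_implicative_lattice S le meet join bt tp imp \<longleftrightarrow>
     bounded_lattice_on S le meet join bt tp \<and>
     (\<forall>a\<in>S. \<forall>b\<in>S. imp a b \<in> S) \<and>
     \<comment> \<open>A1\<close>
     (\<forall>a\<in>S. \<forall>b\<in>S. \<forall>c\<in>S. imp (join a b) c = meet (imp a c) (imp b c)) \<and>
     \<comment> \<open>A2\<close>
     (\<forall>a\<in>S. \<forall>b\<in>S. \<forall>c\<in>S. imp a (meet b c) = meet (imp a b) (imp a c)) \<and>
     \<comment> \<open>A3\<close>
     (\<forall>a\<in>S. \<forall>b\<in>S. le a b \<longleftrightarrow> le tp (imp a b))"

end

theory Submission
  imports Defs
begin

text \<open>
  Unfolding the Galois closures, \<open>A \<Rightarrow> C\<close> is the set of \<open>u\<close> with \<open>u T' x v\<close> for all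
  \<open>x \<in> A\<close> and \<open>v \<in> C'\<close>. By (F4) the sets of admissible \<open>x\<close> (resp. \<open>v\<close>) are stable
  (resp. co-stable), so the implication does not change when \<open>A\<close> is replaced by its
  closure or \<open>C'\<close> by its closure. Since the join of \<open>A\<close> and \<open>B\<close> is the closure of
  \<open>A \<union> B\<close> and \<open>(B \<inter> C)'\<close> is the closure of \<open>B' \<union> C'\<close>, this gives (A1) and (A2).
  (A3) is (F0): \<open>u T' x v\<close> holds for all \<open>u\<close> exactly when \<open>x \<perp> v\<close>.
\<close>

lemma rprime_subset: "rprime X Y R U \<subseteq> Y"
  unfolding rprime_def by blast

lemma rprime_antimono: "U \<subseteq> W \<Longrightarrow> rprime X Y R W \<subseteq> rprime X Y R U"
  unfolding rprime_def by blast

lemma lprime_antimono: "V \<subseteq> W \<Longrightarrow> lprime X Y R W \<subseteq> lprime X Y R V"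
  unfolding lprime_def by blast

lemma lprime_Un: "lprime X Y R (U \<union> V) = lprime X Y R U \<inter> lprime X Y R V"
  unfolding lprime_def by blast

lemma stable_subset: "stable X Y R A \<Longrightarrow> A \<subseteq> X"
  unfolding stable_def by blast

lemma stable_closed: "stable X Y R A \<Longrightarrow> lprime X Y R (rprime X Y R A) = A"
  unfolding stable_def by simp

lemma costable_closed: "costable X Y R B \<Longrightarrow> rprime X Y R (lprime X Y R B) = B"
  unfolding costable_def by simp

lemma stable_lprime: "V \<subseteq> Y \<Longrightarrow> stable X Y R (lprime X Y R V)"
  unfolding stable_def lprime_def rprime_def by blast

lemma stable_carrier: "stable X Y R X"
  unfolding stable_def lprime_def rprime_def by auto

lemma stable_Int:
  assumes "stable X Y R A" and "stable X Y R B"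
  shows "stable X Y R (A \<inter> B)"
proof -
  have "A \<inter> B = lprime X Y R (rprime X Y R A \<union> rprime X Y R B)"
    by (simp only: lprime_Un stable_closed assms)
  then show ?thesis
    by (simp add: stable_lprime rprime_subset)
qed

lemma lprime_rprime_upper: "W \<subseteq> X \<Longrightarrow> W \<subseteq> lprime X Y R (rprime X Y R W)"
  unfolding lprime_def rprime_def by blast

lemma lprime_rprime_least:
  assumes "stable X Y R K" and "W \<subseteq> K"
  shows "lprime X Y R (rprime X Y R W) \<subseteq> K"
proof -
  have "lprime X Y R (rprime X Y R W) \<subseteq> lprime X Y R (rprime X Y R K)"
    using assms(2) by (intro lprime_antimono rprime_antimono)
  then show ?thesis
    using stable_closed[OF assms(1)] by simp
qed

lemma rprime_lprime_least:
  assumes "costable X Y R K" and "V \<subseteq> K"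
  shows "rprime X Y R (lprime X Y R V) \<subseteq> K"
proof -
  have "rprime X Y R (lprime X Y R V) \<subseteq> rprime X Y R (lprime X Y R K)"
    using assms(2) by (intro lprime_antimono rprime_antimono)
  then show ?thesis
    using costable_closed[OF assms(1)] by simp
qed

lemma bounded_lattice_on_stable:
  "bounded_lattice_on {A. stable X Y R A} (\<subseteq>) (\<inter>) (joinG X Y R) (botG X Y R) X"
proof -
  have join_stable: "stable X Y R (joinG X Y R A B)" for A B
    unfolding joinG_def by (rule stable_lprime, rule rprime_subset)
  have join_upper: "A \<subseteq> joinG X Y R A B" "B \<subseteq> joinG X Y R A B"
    if "stable X Y R A" "stable X Y R B" for A B
    using that stable_subset lprime_rprime_upper[of "A \<union> B" X Y R]
    unfolding joinG_def by blast+
  have join_least: "joinG X Y R A B \<subseteq> C" if "stable X Y R C" "A \<subseteq> C" "B \<subseteq> C" for A B C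
    unfolding joinG_def using that by (intro lprime_rprime_least) auto
  have bot_stable: "stable X Y R (botG X Y R)"
    unfolding botG_def by (rule stable_lprime, rule rprime_subset)
  have bot_least: "botG X Y R \<subseteq> A" if "stable X Y R A" for A
    unfolding botG_def using that by (intro lprime_rprime_least) auto
  show ?thesis
    unfolding bounded_lattice_on_def mem_Collect_eq
    by (intro conjI ballI impI; (elim conjE)?)
      (simp_all add: stable_Int join_stable join_upper join_least bot_stable bot_least
        stable_carrier stable_subset Int_greatest)
qed

lemma impG_eq:
  "impG X R Y T A C = {u \<in> X. \<forall>x\<in>A. \<forall>v\<in>rprime X Y R C. Tdual X Y R T u x v}"
proof -
  let ?S = "{y \<in> Y. \<exists>x\<in>A. \<exists>v\<in>rprime X Y R C. T y x v}"
  have "impG X R Y T A C = lprime X Y R (rprime X Y R (lprime X Y R ?S))"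
    unfolding impG_def tri_def by simp
  also have "\<dots> = lprime X Y R ?S"
    by (rule stable_closed, rule stable_lprime) blast
  also have "\<dots> = {u \<in> X. \<forall>x\<in>A. \<forall>v\<in>rprime X Y R C. Tdual X Y R T u x v}"
    unfolding lprime_def Tdual_def by blast
  finally show ?thesis .
qed

lemma stable_impG: "stable X Y R (impG X R Y T A C)"
  unfolding impG_def tri_def by (rule stable_lprime, rule rprime_subset)

lemma impG_joinG_left:
  assumes stable_left: "\<And>u v. u \<in> X \<Longrightarrow> v \<in> Y \<Longrightarrow> stable X Y R {x \<in> X. Tdual X Y R T u x v}"
    and "A \<subseteq> X" and "B \<subseteq> X"
  shows "impG X R Y T (joinG X Y R A B) C = impG X R Y T A C \<inter> impG X R Y T B C"
proof -
  have "joinG X Y R A B \<subseteq> {x \<in> X. Tdual X Y R T u x v}"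
    if "u \<in> X" "v \<in> rprime X Y R C" "\<forall>x\<in>A \<union> B. Tdual X Y R T u x v" for u v
  proof (unfold joinG_def, rule lprime_rprime_least)
    show "stable X Y R {x \<in> X. Tdual X Y R T u x v}"
      using that(2) rprime_subset[of X Y R C] by (intro stable_left[OF that(1)]) blast
    show "A \<union> B \<subseteq> {x \<in> X. Tdual X Y R T u x v}"
      using that(3) assms(2,3) by blast
  qed
  moreover have "A \<union> B \<subseteq> joinG X Y R A B"
    unfolding joinG_def using assms(2,3) by (intro lprime_rprime_upper) blast
  ultimately show ?thesis
    unfolding impG_eq by blast
qed

lemma impG_Int_right:
  assumes costable_right: "\<And>u x. u \<in> X \<Longrightarrow> x \<in> X \<Longrightarrow> costable X Y R {v \<in> Y. Tdual X Y R T u x v}"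
    and "A \<subseteq> X" and "stable X Y R B" and "stable X Y R C"
  shows "impG X R Y T A (B \<inter> C) = impG X R Y T A B \<inter> impG X R Y T A C"
proof -
  have Int_eq: "B \<inter> C = lprime X Y R (rprime X Y R B \<union> rprime X Y R C)"
    by (simp only: lprime_Un stable_closed assms(3,4))
  have "rprime X Y R (B \<inter> C) \<subseteq> {v \<in> Y. Tdual X Y R T u x v}"
    if "u \<in> X" "x \<in> A" "\<forall>v\<in>rprime X Y R B \<union> rprime X Y R C. Tdual X Y R T u x v" for u x
  proof (unfold Int_eq, rule rprime_lprime_least)
    show "costable X Y R {v \<in> Y. Tdual X Y R T u x v}"
      using that(2) assms(2) by (intro costable_right[OF that(1)]) blast
    show "rprime X Y R B \<union> rprime X Y R C \<subseteq> {v \<in> Y. Tdual X Y R T u x v}"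
      using that(3) rprime_subset[of X Y R B] rprime_subset[of X Y R C] by blast
  qed
  moreover have "rprime X Y R B \<union> rprime X Y R C \<subseteq> rprime X Y R (B \<inter> C)"
    unfolding rprime_def by blast
  ultimately show ?thesis
    unfolding impG_eq by blast
qed

lemma subset_iff_carrier_subset_impG:
  assumes perp_iff: "\<And>x y. x \<in> X \<Longrightarrow> y \<in> Y \<Longrightarrow> R x y \<longleftrightarrow> (\<forall>u\<in>X. Tdual X Y R T u x y)"
    and "A \<subseteq> X" and "stable X Y R C"
  shows "A \<subseteq> C \<longleftrightarrow> X \<subseteq> impG X R Y T A C"
proof -
  have "A \<subseteq> C \<longleftrightarrow> A \<subseteq> lprime X Y R (rprime X Y R C)"
    using stable_closed[OF assms(3)] by simp
  also have "\<dots> \<longleftrightarrow> (\<forall>x\<in>A. \<forall>v\<in>rprime X Y R C. R x v)"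
    using assms(2) unfolding lprime_def by blast
  also have "\<dots> \<longleftrightarrow> X \<subseteq> impG X R Y T A C"
    unfolding impG_eq using perp_iff assms(2) rprime_subset[of X Y R C] by blast
  finally show ?thesis .
qed

lemma implicative_frameD:
  assumes "implicative_frame X R Y T"
  shows "\<And>x y. x \<in> X \<Longrightarrow> y \<in> Y \<Longrightarrow> R x y \<longleftrightarrow> (\<forall>u\<in>X. Tdual X Y R T u x y)"
    and "\<And>u v. u \<in> X \<Longrightarrow> v \<in> Y \<Longrightarrow> stable X Y R {x \<in> X. Tdual X Y R T u x v}"
    and "\<And>u x. u \<in> X \<Longrightarrow> x \<in> X \<Longrightarrow> costable X Y R {v \<in> Y. Tdual X Y R T u x v}"
  using assms unfolding implicative_frame_def by blast+

theorem corollary3p7: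
  fixes X :: "'x set" and Y :: "'y set"
    and R :: "'x \<Rightarrow> 'y \<Rightarrow> bool" and T :: "'y \<Rightarrow> 'x \<Rightarrow> 'y \<Rightarrow> bool"
  assumes "implicative_frame X R Y T"
  shows "integral_implicative_lattice {A. stable X Y R A} (\<subseteq>) (\<inter>)
           (joinG X Y R) (botG X Y R) X (impG X R Y T)"
  unfolding integral_implicative_lattice_def mem_Collect_eq
  by (intro conjI ballI bounded_lattice_on_stable stable_impG
      impG_joinG_left[OF implicative_frameD(2)[OF assms]]
      impG_Int_right[OF implicative_frameD(3)[OF assms]]
      subset_iff_carrier_subset_impG[OF implicative_frameD(1)[OF assms]])
    (simp_all add: stable_subset)

end
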